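(* Let $A\in\mathbb R^{n\times n}$, $B\in\mathbb R^{n\times m}$, $K\in\mathbb R^{m\times n}$ be as in the context, and let $$\gamma^*_{L0}\;=\;\max_{\alpha\in\mathcal A_0}\ \inf_{P\in\mathbb S^n,\,P\succeq 0}\ \lambda_{\max}\big(A(\alpha)^TP+PA(\alpha)\big)\ \in [-\infty,\infty).$$ Then $K$ is resilient if and only if $\gamma^*_{L0}=-\infty$, and $K$ is not resilient if and only if $\gamma^*_{L0}\ge 0$.
   Context: Fix integers $N\ge 1$ and $n_1,\dots,n_N\ge 1$, $m_1,\dots,m_N\ge 0$, with $n=\sum_i n_i$, $m=\sum_i m_i$. Let $A=[A_{ij}]_{1\le i,j\le N}\in\mathbb R^{n\times n}$ with blocks $A_{ij}\in\mathbb R^{n_i\times n_j}$, $B=\mathrm{diag}(B_1,\dots,B_N)\in\mathbb R^{n\times m}$ with $B_i\in\mathbb R^{n_i\times m_i}$, and $K=[K_{ij}]_{1\le i,j\le N}\in\mathbb R^{m\times n}$ with blocks $K_{ij}\in\mathbb R^{m_i\times n_j}$. For a matrix $\alpha\in\mathbb R^{N\times N}$, write $K\circ\alpha=[\alpha_{ij}K_{ij}]_{1\le i,j\le N}$ (each block scaled by the corresponding scalar entry) and $A(\alpha)=A+B\,(K\circ\alpha)$. The pure attack space is $\mathcal A_0=\{\alpha\in\{0,1\}^{N\times N}:\alpha_{ii}=1 \text{ for all } i\}$. A square matrix is called stable if all its eigenvalues have strictly negative real part. The controller $K$ is called resilient if $A(\alpha)$ is stable for every $\alpha\in\mathcal A_0$,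 and not resilient otherwise (i.e. if $A(\alpha)$ is not stable for some $\alpha\in\mathcal A_0$). $\mathbb S^n$ denotes real symmetric $n\times n$ matrices, $\succeq$ the positive semidefinite order, and $\lambda_{\max}$ the largest eigenvalue of a symmetric matrix. *)

theory Defs
  imports "Jordan_Normal_Form.Char_Poly" "HOL-Library.Extended_Real"
begin

text \<open>Subsystems are indexed 0..N-1 (0-based); block i of the
  state (resp. input) vector has size ns i (resp. ms i) and blocks are contiguous.
  blk s r is the index of the block containing the scalar index r.\<close>

definition blk :: "(nat \<Rightarrow> nat) \<Rightarrow> nat \<Rightarrow> nat" where
  "blk s r = (LEAST i. r < (\<Sum>k\<le>i. s k))"

definition block_diag :: "nat \<Rightarrow> (nat \<Rightarrow> nat) \<Rightarrow> (nat \<Rightarrow> nat) \<Rightarrow> real mat \<Rightarrow> bool" where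
  "block_diag N ns ms B =
     (B \<in> carrier_mat (\<Sum>i<N. ns i) (\<Sum>i<N. ms i) \<and>
      (\<forall>r c. r < dim_row B \<longrightarrow> c < dim_col B \<longrightarrow> blk ns r \<noteq> blk ms c \<longrightarrow> B $$ (r, c) = 0))"

definition blk_scale :: "(nat \<Rightarrow> nat) \<Rightarrow> (nat \<Rightarrow> nat) \<Rightarrow> real mat \<Rightarrow> real mat \<Rightarrow> real mat" where
  "blk_scale ns ms K \<alpha> =
     mat (dim_row K) (dim_col K) (\<lambda>(r, c). \<alpha> $$ (blk ms r, blk ns c) * K $$ (r, c))"

definition A_alpha :: "(nat \<Rightarrow> nat) \<Rightarrow> (nat \<Rightarrow> nat) \<Rightarrow> real mat \<Rightarrow> real mat \<Rightarrow> real mat \<Rightarrow> real mat \<Rightarrow> real mat" where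
  "A_alpha ns ms A B K \<alpha> = A + B * blk_scale ns ms K \<alpha>"

definition attack_space :: "nat \<Rightarrow> real mat set" where
  "attack_space N = {\<alpha> \<in> carrier_mat N N.
      (\<forall>i j. i < N \<longrightarrow> j < N \<longrightarrow> \<alpha> $$ (i, j) = 0 \<or> \<alpha> $$ (i, j) = 1) \<and>
      (\<forall>i < N. \<alpha> $$ (i, i) = 1)}"

definition stable :: "real mat \<Rightarrow> bool" where
  "stable M = (\<forall>k. eigenvalue (map_mat complex_of_real M) k \<longrightarrow> Re k < 0)"

definition resilient :: "nat \<Rightarrow> (nat \<Rightarrow> nat) \<Rightarrow> (nat \<Rightarrow> nat) \<Rightarrow> real mat \<Rightarrow> real mat \<Rightarrow> real mat \<Rightarrow> bool" where
  "resilient N ns ms A B K = (\<forall>\<alpha> \<in> attack_space N. stable (A_alpha ns ms A B K \<alpha>))"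

definition psd_set :: "nat \<Rightarrow> real mat set" where
  "psd_set n = {P \<in> carrier_mat n n. transpose_mat P = P \<and>
                  (\<forall>x \<in> carrier_vec n. 0 \<le> x \<bullet> (P *\<^sub>v x))}"

text \<open>Largest eigenvalue of a real symmetric matrix (all its eigenvalues are real).\<close>
definition lambda_max :: "real mat \<Rightarrow> real" where
  "lambda_max M = Max {k. eigenvalue M k}"

definition gamma_L0 :: "nat \<Rightarrow> (nat \<Rightarrow> nat) \<Rightarrow> (nat \<Rightarrow> nat) \<Rightarrow> real mat \<Rightarrow> real mat \<Rightarrow> real mat \<Rightarrow> ereal" where
  "gamma_L0 N ns ms A B K =
     Max ((\<lambda>\<alpha>. INF P \<in> psd_set (\<Sum>i<N. ns i).
              ereal (lambda_max (transpose_mat (A_alpha ns ms A B K \<alpha>) * P + P * A_alpha ns ms A B K \<alpha>)))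
          ` attack_space N)"

end

theory Submission
  imports Defs "Jordan_Normal_Form.Schur_Decomposition"
begin

text \<open>For a real symmetric matrix, \<open>\<lambda>\<^sub>m\<^sub>a\<^sub>x\<close> is the maximum of the Rayleigh quotient, which is
  attained on the unit sphere by compactness. Write \<open>Q = M\<^sup>T P + P M\<close>, so that
  \<open>x\<^sup>T Q x = 2 (M x)\<^sup>T (P x)\<close>.

  If \<open>M\<close> is unstable, take an eigenvector \<open>a + i b\<close> for an eigenvalue \<open>k\<close> with \<open>Re k \<ge> 0\<close>;
  then \<open>a\<^sup>T Q a + b\<^sup>T Q b = 2 Re k (a\<^sup>T P a + b\<^sup>T P b) \<ge> 0\<close> for every \<open>P \<succeq> 0\<close>, hence
  \<open>\<lambda>\<^sub>m\<^sub>a\<^sub>x Q \<ge> 0\<close>. If \<open>M\<close> is stable, triangularise it as \<open>W M = T W\<close> (Schur) and conjugate \<open>T\<close>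
  by \<open>diag(\<epsilon>\<^sup>i)\<close>: for small \<open>\<epsilon>\<close> the diagonal, with negative real parts, dominates, and the
  Gram matrix \<open>P\<close> of the scaled \<open>W\<close> satisfies \<open>x\<^sup>T Q x < 0\<close> for \<open>x \<noteq> 0\<close>; scaling \<open>P\<close> makes
  \<open>\<lambda>\<^sub>m\<^sub>a\<^sub>x Q\<close> arbitrarily negative. So each inner infimum is \<open>-\<infinity>\<close> or nonnegative according
  to the stability of \<open>A(\<alpha>)\<close>, and the maximum over the finite attack space inherits this.\<close>

text \<open>Vectors of \<open>\<real>\<^sup>n\<close> are represented as functions \<open>nat \<Rightarrow> real\<close> of which only the values
  below \<open>n\<close> matter; this lets real and complex coordinates be mixed freely.\<close>

definition sprod :: "nat \<Rightarrow> (nat \<Rightarrow> real) \<Rightarrow> (nat \<Rightarrow> real) \<Rightarrow> real" where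
  "sprod n x y = (\<Sum>i<n. x i * y i)"

definition mvmult :: "nat \<Rightarrow> (nat \<Rightarrow> nat \<Rightarrow> real) \<Rightarrow> (nat \<Rightarrow> real) \<Rightarrow> nat \<Rightarrow> real" where
  "mvmult n Q x = (\<lambda>i. \<Sum>j<n. Q i j * x j)"

definition qform :: "nat \<Rightarrow> (nat \<Rightarrow> nat \<Rightarrow> real) \<Rightarrow> (nat \<Rightarrow> real) \<Rightarrow> real" where
  "qform n Q x = sprod n x (mvmult n Q x)"

abbreviation entries :: "'a mat \<Rightarrow> nat \<Rightarrow> nat \<Rightarrow> 'a" where
  "entries A \<equiv> \<lambda>i j. A $$ (i, j)"

lemma sprod_self_nonneg: "0 \<le> sprod n x x"
  unfolding sprod_def by (auto intro: sum_nonneg)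

lemma sprod_self_eq_0D: "sprod n x x = 0 \<Longrightarrow> i < n \<Longrightarrow> x i = 0"
  unfolding sprod_def by (subst (asm) sum_nonneg_eq_0_iff) auto

lemma sprod_commute: "sprod n x y = sprod n y x"
  unfolding sprod_def by (simp add: mult.commute)

lemma sprod_add_scaled_left: "sprod n (\<lambda>i. x i + c * y i) z = sprod n x z + c * sprod n y z"
  unfolding sprod_def by (simp add: algebra_simps sum.distrib sum_distrib_left)

lemma sprod_add_scaled_right: "sprod n z (\<lambda>i. x i + c * y i) = sprod n z x + c * sprod n z y"
  unfolding sprod_def by (simp add: algebra_simps sum.distrib sum_distrib_left)

lemma sprod_lincomb_left: "sprod n (\<lambda>i. c * x i + d * y i) z = c * sprod n x z + d * sprod n y z"
  unfolding sprod_def by (simp add: algebra_simps sum.distrib sum_distrib_left)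

lemma sprod_scale_left: "sprod n (\<lambda>i. c * x i) y = c * sprod n x y"
  unfolding sprod_def by (simp add: algebra_simps sum_distrib_left)

lemma sprod_scale_right: "sprod n y (\<lambda>i. c * x i) = c * sprod n y x"
  unfolding sprod_def by (simp add: algebra_simps sum_distrib_left)

lemma sprod_cong:
  "(\<And>i. i < n \<Longrightarrow> x i = x' i) \<Longrightarrow> (\<And>i. i < n \<Longrightarrow> y i = y' i) \<Longrightarrow> sprod n x y = sprod n x' y'"
  unfolding sprod_def by (intro sum.cong) auto

lemma mvmult_add_scaled: "mvmult n Q (\<lambda>i. x i + c * y i) = (\<lambda>i. mvmult n Q x i + c * mvmult n Q y i)"
  unfolding mvmult_def by (simp add: algebra_simps sum.distrib sum_distrib_left)

lemma mvmult_scale: "mvmult n Q (\<lambda>i. c * x i) = (\<lambda>i. c * mvmult n Q x i)"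
  unfolding mvmult_def by (simp add: algebra_simps sum_distrib_left)

lemma mvmult_cong:
  "(\<And>i j. i < n \<Longrightarrow> j < n \<Longrightarrow> Q i j = Q' i j) \<Longrightarrow> (\<And>j. j < n \<Longrightarrow> x j = x' j) \<Longrightarrow>
   i < n \<Longrightarrow> mvmult n Q x i = mvmult n Q' x' i"
  unfolding mvmult_def by (intro sum.cong) auto

lemma qform_expand: "qform n Q x = (\<Sum>i<n. \<Sum>j<n. x i * Q i j * x j)"
  unfolding qform_def sprod_def mvmult_def by (simp add: sum_distrib_left mult.assoc)

lemma qform_scale: "qform n Q (\<lambda>i. c * x i) = c\<^sup>2 * qform n Q x"
  unfolding qform_def mvmult_scale sprod_scale_left sprod_scale_right
  by (simp add: power2_eq_square)

lemma qform_eq_0_if_sprod_eq_0: "sprod n x x = 0 \<Longrightarrow> qform n Q x = 0"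
  unfolding qform_expand using sprod_self_eq_0D[of n x] by (intro sum.neutral) auto

lemma sprod_mvmult_symmetric:
  assumes "\<forall>i<n. \<forall>j<n. Q i j = Q j i"
  shows "sprod n x (mvmult n Q y) = sprod n y (mvmult n Q x)"
proof -
  have "sprod n x (mvmult n Q y) = (\<Sum>i<n. \<Sum>j<n. x i * Q i j * y j)"
    unfolding sprod_def mvmult_def by (simp add: sum_distrib_left mult.assoc)
  also have "\<dots> = (\<Sum>j<n. \<Sum>i<n. y j * Q j i * x i)"
    using assms by (subst sum.swap) (auto intro!: sum.cong simp: mult.commute)
  also have "\<dots> = sprod n y (mvmult n Q x)"
    unfolding sprod_def mvmult_def by (simp add: sum_distrib_left mult.assoc)
  finally show ?thesis .
qed

lemma abs_le_1_if_sprod_eq_1: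
  assumes "sprod n x x = 1" "i < n" shows "\<bar>x i\<bar> \<le> 1"
proof -
  have "x i * x i \<le> sprod n x x"
    unfolding sprod_def using assms(2) by (intro member_le_sum) auto
  then show ?thesis using assms(1) abs_le_square_iff[of "x i" 1] by (simp add: power2_eq_square)
qed

lemma qform_le_sum_abs:
  assumes "sprod n x x = 1"
  shows "qform n Q x \<le> (\<Sum>i<n. \<Sum>j<n. \<bar>Q i j\<bar>)"
  unfolding qform_expand
proof (intro sum_mono)
  fix i j assume "i \<in> {..<n}" "j \<in> {..<n}"
  then have "\<bar>x i\<bar> \<le> 1" "\<bar>x j\<bar> \<le> 1" using abs_le_1_if_sprod_eq_1[OF assms] by auto
  then have "\<bar>x i\<bar> * \<bar>Q i j\<bar> * \<bar>x j\<bar> \<le> 1 * \<bar>Q i j\<bar> * 1"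
    by (intro mult_mono) auto
  then show "x i * Q i j * x j \<le> \<bar>Q i j\<bar>"
    by (metis abs_ge_self abs_mult order_trans mult_1_left mult_1_right)
qed

lemma bounded_seq_has_coordinatewise_convergent_subseq:
  fixes x :: "nat \<Rightarrow> nat \<Rightarrow> real"
  assumes "\<And>k i. i < m \<Longrightarrow> \<bar>x k i\<bar> \<le> C"
  shows "\<exists>r. strict_mono r \<and> (\<forall>i<m. convergent (\<lambda>k. x (r k) i))"
  using assms
proof (induction m)
  case 0
  show ?case using strict_mono_id by blast
next
  case (Suc m)
  then obtain r where r: "strict_mono r" "\<forall>i<m. convergent (\<lambda>k. x (r k) i)"
    by auto
  obtain g where g: "strict_mono g" "monoseq (\<lambda>k. x (r (g k)) m)"
    using seq_monosub[of "\<lambda>k. x (r k) m"] by blast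
  have "Bseq (\<lambda>k. x (r (g k)) m)"
    using Suc.prems[of m] by (intro BseqI'[of _ C]) simp
  then have "convergent (\<lambda>k. x (r (g k)) m)"
    using g(2) by (rule Bseq_monoseq_convergent)
  moreover have "convergent (\<lambda>k. x (r (g k)) i)" if "i < m" for i
  proof -
    obtain L where "(\<lambda>k. x (r k) i) \<longlonglongrightarrow> L"
      using r(2) \<open>i < m\<close> unfolding convergent_def by blast
    from LIMSEQ_subseq_LIMSEQ[OF this g(1)] show ?thesis
      by (auto simp: o_def intro: convergentI)
  qed
  ultimately have "\<forall>i<Suc m. convergent (\<lambda>k. x (r (g k)) i)"
    using less_Suc_eq by auto
  then show ?case using strict_mono_o[OF r(1) g(1)] unfolding o_def by blast
qed

lemma tendsto_sprod_qform:
  assumes "\<And>i. i < n \<Longrightarrow> (\<lambda>k. x k i) \<longlonglongrightarrow> l i"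
  shows "(\<lambda>k. sprod n (x k) (x k)) \<longlonglongrightarrow> sprod n l l"
    and "(\<lambda>k. qform n Q (x k)) \<longlonglongrightarrow> qform n Q l"
  unfolding sprod_def qform_expand using assms by (auto intro!: tendsto_sum tendsto_mult)

lemma qform_sup_attained:
  assumes "0 < n"
  obtains x where "sprod n x x = 1" "\<And>y. sprod n y y = 1 \<Longrightarrow> qform n Q y \<le> qform n Q x"
proof -
  define U where "U = {x. sprod n x x = 1}"
  define \<mu> where "\<mu> = Sup (qform n Q ` U)"
  have "(\<lambda>i. if i = 0 then 1 else 0) \<in> U"
    unfolding U_def sprod_def using assms by (simp add: if_distrib sum.delta' cong: if_cong)
  then have ne: "qform n Q ` U \<noteq> {}" by blast
  have bdd: "bdd_above (qform n Q ` U)"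
    unfolding bdd_above_def U_def using qform_le_sum_abs[of n _ Q] by blast
  have le_\<mu>: "qform n Q x \<le> \<mu>" if "x \<in> U" for x
    unfolding \<mu>_def using bdd that by (intro cSup_upper) auto
  have "\<exists>x\<in>U. \<mu> - inverse (real (Suc k)) < qform n Q x" for k
    unfolding \<mu>_def using less_cSup_iff[OF ne bdd, of "\<mu> - inverse (real (Suc k))"]
    by (simp add: \<mu>_def)
  then obtain xs where xs: "\<And>k. xs k \<in> U" "\<And>k. \<mu> - inverse (real (Suc k)) < qform n Q (xs k)"
    by metis
  have "\<And>k i. i < n \<Longrightarrow> \<bar>xs k i\<bar> \<le> 1"
    using xs(1) abs_le_1_if_sprod_eq_1 unfolding U_def by blast
  from bounded_seq_has_coordinatewise_convergent_subseq[of n xs, OF this]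
  obtain r where r: "strict_mono r" "\<forall>i<n. convergent (\<lambda>k. xs (r k) i)"
    by blast
  define l where "l i = lim (\<lambda>k. xs (r k) i)" for i
  have lim_l: "(\<lambda>k. xs (r k) i) \<longlonglongrightarrow> l i" if "i < n" for i
    unfolding l_def using r(2) that convergent_LIMSEQ_iff by blast
  note lim = tendsto_sprod_qform[of n "\<lambda>k. xs (r k)", OF lim_l]
  have "(\<lambda>k. sprod n (xs (r k)) (xs (r k))) = (\<lambda>k. 1)"
    using xs(1) unfolding U_def by auto
  with lim(1) have l: "sprod n l l = 1"
    using LIMSEQ_unique tendsto_const by metis
  have "(\<lambda>k. qform n Q (xs (r k))) \<longlonglongrightarrow> \<mu>"
  proof (rule tendsto_sandwich)
    have "(\<lambda>k. inverse (real (Suc (r k)))) \<longlonglongrightarrow> 0"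
      using LIMSEQ_subseq_LIMSEQ[OF LIMSEQ_inverse_real_of_nat r(1)] by (simp add: o_def)
    then show "(\<lambda>k. \<mu> - inverse (real (Suc (r k)))) \<longlonglongrightarrow> \<mu>"
      using tendsto_diff[OF tendsto_const, of _ 0 sequentially \<mu>] by simp
    show "\<forall>\<^sub>F k in sequentially. \<mu> - inverse (real (Suc (r k))) \<le> qform n Q (xs (r k))"
      using xs(2) less_imp_le by (intro always_eventually) blast
    show "\<forall>\<^sub>F k in sequentially. qform n Q (xs (r k)) \<le> \<mu>"
      using xs(1) le_\<mu> by (intro always_eventually) blast
  qed simp
  with lim(2) have "qform n Q l = \<mu>" using LIMSEQ_unique by blast
  then show ?thesis
    using that[OF l] le_\<mu> unfolding U_def by simp
qed

lemma qform_le_max_on_sphere: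
  assumes "sprod n x x = 1" "\<And>y. sprod n y y = 1 \<Longrightarrow> qform n Q y \<le> qform n Q x"
  shows "qform n Q y \<le> qform n Q x * sprod n y y"
proof (cases "sprod n y y = 0")
  case True
  then show ?thesis using qform_eq_0_if_sprod_eq_0 by simp
next
  case False
  define p where "p = sprod n y y"
  have p: "p > 0" using False sprod_self_nonneg[of n y] unfolding p_def by linarith
  define c where "c = 1 / sqrt p"
  have c2: "c\<^sup>2 = 1 / p" unfolding c_def using p by (simp add: power_divide)
  have "sprod n (\<lambda>i. c * y i) (\<lambda>i. c * y i) = c\<^sup>2 * p"
    unfolding p_def by (simp add: sprod_scale_left sprod_scale_right power2_eq_square)
  then have "sprod n (\<lambda>i. c * y i) (\<lambda>i. c * y i) = 1"
    using c2 p by simp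
  from assms(2)[OF this] have "c\<^sup>2 * qform n Q y \<le> qform n Q x"
    unfolding qform_scale .
  then have "qform n Q y / p \<le> qform n Q x" using c2 by simp
  then show ?thesis using p unfolding p_def by (simp add: divide_le_eq)
qed

lemma linear_coeff_eq_0_if_quadratic_nonpos:
  fixes b c :: real
  assumes "\<And>s. s * b + s\<^sup>2 * c \<le> 0"
  shows "b = 0"
proof (rule ccontr)
  assume "b \<noteq> 0"
  define d where "d = \<bar>c\<bar> + 1"
  define s where "s = b / d"
  have "d > 0" unfolding d_def by simp
  then have "s * b - s\<^sup>2 * (d - 1) = b\<^sup>2 / d\<^sup>2"
    unfolding s_def by (simp add: field_simps power2_eq_square)
  then have "s * b - s\<^sup>2 * \<bar>c\<bar> = b\<^sup>2 / (\<bar>c\<bar> + 1)\<^sup>2"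
    unfolding d_def by simp
  moreover have "s\<^sup>2 * - \<bar>c\<bar> \<le> s\<^sup>2 * c"
    by (intro mult_left_mono) auto
  moreover have "b\<^sup>2 / (\<bar>c\<bar> + 1)\<^sup>2 > 0" using \<open>b \<noteq> 0\<close> by simp
  ultimately have "s * b + s\<^sup>2 * c > 0" by linarith
  with assms[of s] show False by simp
qed

text \<open>A maximiser of the Rayleigh quotient is an eigenvector: perturbing it in the direction of
  the residual \<open>z = Q x - \<mu> x\<close> changes the quotient to first order by \<open>2 s |z|\<^sup>2\<close>.\<close>
lemma rayleigh_maximiser_eigenvector:
  assumes sym: "\<forall>i<n. \<forall>j<n. Q i j = Q j i" and x: "sprod n x x = 1"
    and max: "\<And>y. qform n Q y \<le> qform n Q x * sprod n y y" and "i < n"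
  shows "mvmult n Q x i = qform n Q x * x i"
proof -
  define \<mu> where "\<mu> = qform n Q x"
  define z where "z i = mvmult n Q x i - \<mu> * x i" for i
  have z: "sprod n z (mvmult n Q x) - \<mu> * sprod n z x = sprod n z z"
    using sprod_add_scaled_right[of n z "mvmult n Q x" "- \<mu>" x] unfolding z_def by simp
  have quadratic: "s * (2 * sprod n z z) + s\<^sup>2 * (qform n Q z - \<mu> * sprod n z z) \<le> 0" for s
  proof -
    have "qform n Q (\<lambda>i. x i + s * z i) =
        qform n Q x + 2 * s * sprod n z (mvmult n Q x) + s\<^sup>2 * qform n Q z"
      unfolding qform_def mvmult_add_scaled sprod_add_scaled_left sprod_add_scaled_right
      using sprod_mvmult_symmetric[OF sym, of x z] by (simp add: algebra_simps power2_eq_square)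
    moreover have "sprod n (\<lambda>i. x i + s * z i) (\<lambda>i. x i + s * z i) =
        1 + 2 * s * sprod n z x + s\<^sup>2 * sprod n z z"
      unfolding sprod_add_scaled_left sprod_add_scaled_right using x sprod_commute[of n x z]
      by (simp add: algebra_simps power2_eq_square)
    ultimately have "\<mu> + 2 * s * sprod n z (mvmult n Q x) + s\<^sup>2 * qform n Q z
        \<le> \<mu> * (1 + 2 * s * sprod n z x + s\<^sup>2 * sprod n z z)"
      using max[of "\<lambda>i. x i + s * z i"] unfolding \<mu>_def by simp
    then have "s * (2 * (sprod n z (mvmult n Q x) - \<mu> * sprod n z x)) +
        s\<^sup>2 * (qform n Q z - \<mu> * sprod n z z) \<le> 0"
      by (simp add: algebra_simps)
    then show ?thesis unfolding z .
  qed
  have "2 * sprod n z z = 0"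
    using quadratic by (rule linear_coeff_eq_0_if_quadratic_nonpos)
  then show ?thesis using sprod_self_eq_0D[of n z i] \<open>i < n\<close> unfolding z_def \<mu>_def by simp
qed

lemma mult_mat_entry_sum:
  assumes "A \<in> carrier_mat n m" "B \<in> carrier_mat m p" "i < n" "j < p"
  shows "(A * B) $$ (i, j) = (\<Sum>k<m. A $$ (i, k) * B $$ (k, j))"
  using assms by (simp add: scalar_prod_def lessThan_atLeast0)

lemma mult_mat_vec_entry_sum:
  assumes "A \<in> carrier_mat n m" "v \<in> carrier_vec m" "i < n"
  shows "(A *\<^sub>v v) $ i = (\<Sum>k<m. A $$ (i, k) * v $ k)"
  using assms by (simp add: scalar_prod_def lessThan_atLeast0)

lemma scalar_prod_eq_sprod:
  "u \<in> carrier_vec n \<Longrightarrow> w \<in> carrier_vec n \<Longrightarrow> u \<bullet> w = sprod n (\<lambda>i. u $ i) (\<lambda>i. w $ i)"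
  by (simp add: scalar_prod_def sprod_def lessThan_atLeast0)

lemma mvmult_eq_mult_mat_vec:
  assumes "A \<in> carrier_mat n m" "i < n"
  shows "mvmult m (entries A) x i = (A *\<^sub>v vec m x) $ i"
proof -
  have "(A *\<^sub>v vec m x) $ i = (\<Sum>k<m. A $$ (i, k) * vec m x $ k)"
    using assms by (intro mult_mat_vec_entry_sum) auto
  then show ?thesis unfolding mvmult_def by simp
qed

lemma qform_eq_scalar_prod:
  "Q \<in> carrier_mat n n \<Longrightarrow> qform n (entries Q) x = vec n x \<bullet> (Q *\<^sub>v vec n x)"
  unfolding qform_def by (auto simp: scalar_prod_eq_sprod mvmult_eq_mult_mat_vec intro: sprod_cong)

lemma transpose_mat_eq_iff_symmetric:
  "P \<in> carrier_mat n n \<Longrightarrow> transpose_mat P = P \<longleftrightarrow> (\<forall>i<n. \<forall>j<n. P $$ (i, j) = P $$ (j, i))"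
proof
  assume "P \<in> carrier_mat n n" "transpose_mat P = P"
  then show "\<forall>i<n. \<forall>j<n. P $$ (i, j) = P $$ (j, i)"
    by (metis carrier_matD index_transpose_mat(1))
next
  assume "P \<in> carrier_mat n n" "\<forall>i<n. \<forall>j<n. P $$ (i, j) = P $$ (j, i)"
  then show "transpose_mat P = P" by (intro eq_matI) auto
qed

lemma psd_set_iff_qform:
  "P \<in> psd_set n \<longleftrightarrow> P \<in> carrier_mat n n \<and> transpose_mat P = P \<and> (\<forall>x. 0 \<le> qform n (entries P) x)"
proof -
  have "(\<forall>x \<in> carrier_vec n. 0 \<le> x \<bullet> (P *\<^sub>v x)) \<longleftrightarrow> (\<forall>x. 0 \<le> qform n (entries P) x)"
    if P: "P \<in> carrier_mat n n"
  proof
    assume "\<forall>x \<in> carrier_vec n. 0 \<le> x \<bullet> (P *\<^sub>v x)"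
    then show "\<forall>x. 0 \<le> qform n (entries P) x"
      using P by (simp add: qform_eq_scalar_prod)
  next
    assume nonneg: "\<forall>x. 0 \<le> qform n (entries P) x"
    show "\<forall>x \<in> carrier_vec n. 0 \<le> x \<bullet> (P *\<^sub>v x)"
    proof
      fix x :: "real vec" assume x: "x \<in> carrier_vec n"
      then have "vec n (\<lambda>i. x $ i) = x" by auto
      moreover have "0 \<le> qform n (entries P) (\<lambda>i. x $ i)" using nonneg ..
      ultimately show "0 \<le> x \<bullet> (P *\<^sub>v x)"
        using P by (simp add: qform_eq_scalar_prod)
    qed
  qed
  then show ?thesis
    unfolding psd_set_def by blast
qed

lemma finite_eigenvalues:
  fixes A :: "'a::field mat"
  assumes "A \<in> carrier_mat n n"
  shows "finite {k. eigenvalue A k}"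
proof -
  have "char_poly A \<noteq> 0" using degree_monic_char_poly[OF assms] by auto
  then have "finite {k. poly (char_poly A) k = 0}" by (rule poly_roots_finite)
  then show ?thesis using eigenvalue_root_char_poly[OF assms] by simp
qed

lemma eigenvalue_le_if_qform_le:
  assumes Q: "Q \<in> carrier_mat n n" and bound: "\<And>y. qform n (entries Q) y \<le> \<mu> * sprod n y y"
    and "eigenvalue Q k"
  shows "k \<le> \<mu>"
proof -
  obtain v where v: "v \<in> carrier_vec n" "v \<noteq> 0\<^sub>v n" "Q *\<^sub>v v = k \<cdot>\<^sub>v v"
    using \<open>eigenvalue Q k\<close> Q unfolding eigenvalue_def eigenvector_def by auto
  define x where "x i = v $ i" for i
  have "qform n (entries Q) x = sprod n x (\<lambda>i. k * x i)"
    unfolding qform_def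
  proof (intro sprod_cong)
    fix i assume i: "i < n"
    have "mvmult n (entries Q) x i = (Q *\<^sub>v v) $ i"
      using mult_mat_vec_entry_sum[OF Q v(1) i] unfolding mvmult_def x_def by simp
    also have "\<dots> = k * x i" using v(3) i v(1) unfolding x_def by simp
    finally show "mvmult n (entries Q) x i = k * x i" .
  qed auto
  then have "qform n (entries Q) x = k * sprod n x x" by (simp add: sprod_scale_right)
  moreover have "sprod n x x \<noteq> 0"
  proof
    assume "sprod n x x = 0"
    then have "\<forall>i<n. v $ i = 0" using sprod_self_eq_0D unfolding x_def by blast
    then have "v = 0\<^sub>v n" using v(1) by (intro eq_vecI) auto
    with v(2) show False by simp
  qed
  then have "sprod n x x > 0" using sprod_self_nonneg[of n x] by linarith
  ultimately show ?thesis using bound[of x] by simp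
qed

lemma eigenvalue_if_mvmult_eq:
  assumes Q: "Q \<in> carrier_mat n n" and x: "sprod n x x = 1"
    and eig: "\<And>i. i < n \<Longrightarrow> mvmult n (entries Q) x i = \<mu> * x i"
  shows "eigenvalue Q \<mu>"
proof -
  have "vec n x \<noteq> 0\<^sub>v n"
  proof
    assume zero: "vec n x = 0\<^sub>v n"
    have "x i = 0" if "i < n" for i
    proof -
      have "vec n x $ i = 0\<^sub>v n $ i" using zero by simp
      then show ?thesis using that by simp
    qed
    then have "sprod n x x = 0" unfolding sprod_def by simp
    with x show False by simp
  qed
  moreover have "(Q *\<^sub>v vec n x) $ i = \<mu> * x i" if "i < n" for i
    by (simp only: mvmult_eq_mult_mat_vec[OF Q that, symmetric] eig[OF that])
  then have "Q *\<^sub>v vec n x = \<mu> \<cdot>\<^sub>v vec n x"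
    using Q by (intro eq_vecI) auto
  ultimately show ?thesis
    using Q unfolding eigenvalue_def eigenvector_def by (intro exI[of _ "vec n x"]) auto
qed

theorem lambda_max_rayleigh:
  assumes Q: "Q \<in> carrier_mat n n" and sym: "transpose_mat Q = Q" and "0 < n"
  shows "qform n (entries Q) y \<le> lambda_max Q * sprod n y y"
    and "\<exists>x. sprod n x x = 1 \<and> qform n (entries Q) x = lambda_max Q"
proof -
  have sym': "\<forall>i<n. \<forall>j<n. Q $$ (i, j) = Q $$ (j, i)"
    using transpose_mat_eq_iff_symmetric[OF Q] sym by simp
  obtain x where x: "sprod n x x = 1"
    and max: "\<And>y. sprod n y y = 1 \<Longrightarrow> qform n (entries Q) y \<le> qform n (entries Q) x"
    using qform_sup_attained[OF \<open>0 < n\<close>, where Q = "entries Q"] by blast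
  define \<mu> where "\<mu> = qform n (entries Q) x"
  have bound: "qform n (entries Q) y \<le> \<mu> * sprod n y y" for y
    unfolding \<mu>_def using x max by (rule qform_le_max_on_sphere)
  have "eigenvalue Q \<mu>"
    using rayleigh_maximiser_eigenvector[OF sym' x bound[unfolded \<mu>_def]]
    unfolding \<mu>_def by (rule eigenvalue_if_mvmult_eq[OF Q x])
  then have "lambda_max Q = \<mu>"
    unfolding lambda_max_def using finite_eigenvalues[OF Q] eigenvalue_le_if_qform_le[OF Q bound]
    by (intro Max_eqI) auto
  then show "qform n (entries Q) y \<le> lambda_max Q * sprod n y y"
    and "\<exists>x. sprod n x x = 1 \<and> qform n (entries Q) x = lambda_max Q"
    using bound x unfolding \<mu>_def by auto
qed

lemma lyapunov_symmetric:
  fixes M P :: "'a::comm_semiring_0 mat"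
  assumes "M \<in> carrier_mat n n" "P \<in> carrier_mat n n" "transpose_mat P = P"
  shows "transpose_mat (transpose_mat M * P + P * M) = transpose_mat M * P + P * M"
proof -
  have "transpose_mat (transpose_mat M * P) = P * M"
    using assms transpose_mult[of "transpose_mat M" n n P n] by simp
  moreover have "transpose_mat (P * M) = transpose_mat M * P"
    using assms transpose_mult[of P n n M n] by simp
  ultimately show ?thesis
    using assms transpose_add[of "transpose_mat M * P" n n "P * M"]
    by (simp add: comm_add_mat[of "P * M" n n])
qed

lemma scalar_prod_lyapunov:
  fixes M P :: "'a::comm_ring_1 mat"
  assumes M: "M \<in> carrier_mat n n" and P: "P \<in> carrier_mat n n" and sym: "transpose_mat P = P"
    and v: "v \<in> carrier_vec n"
  shows "v \<bullet> ((transpose_mat M * P + P * M) *\<^sub>v v) = 2 * ((M *\<^sub>v v) \<bullet> (P *\<^sub>v v))"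
proof -
  have Mv: "M *\<^sub>v v \<in> carrier_vec n" and Pv: "P *\<^sub>v v \<in> carrier_vec n"
    using M P v by auto
  have "v \<bullet> (transpose_mat M *\<^sub>v (P *\<^sub>v v)) = (transpose_mat M *\<^sub>v (P *\<^sub>v v)) \<bullet> v"
    using M Pv v by (intro comm_scalar_prod[of _ n]) auto
  also have "\<dots> = (P *\<^sub>v v) \<bullet> (M *\<^sub>v v)"
    using transpose_vec_mult_scalar[OF M v Pv] .
  also have "\<dots> = (M *\<^sub>v v) \<bullet> (P *\<^sub>v v)"
    using Pv Mv by (rule comm_scalar_prod)
  finally have 1: "v \<bullet> (transpose_mat M *\<^sub>v (P *\<^sub>v v)) = (M *\<^sub>v v) \<bullet> (P *\<^sub>v v)" .
  have "v \<bullet> (P *\<^sub>v (M *\<^sub>v v)) = (transpose_mat P *\<^sub>v v) \<bullet> (M *\<^sub>v v)"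
    using transpose_vec_mult_scalar[OF P Mv v] by simp
  also have "\<dots> = (M *\<^sub>v v) \<bullet> (P *\<^sub>v v)"
    using sym Mv Pv by (simp add: comm_scalar_prod[OF Pv Mv])
  finally have 2: "v \<bullet> (P *\<^sub>v (M *\<^sub>v v)) = (M *\<^sub>v v) \<bullet> (P *\<^sub>v v)" .
  have "(transpose_mat M * P + P * M) *\<^sub>v v = transpose_mat M *\<^sub>v (P *\<^sub>v v) + P *\<^sub>v (M *\<^sub>v v)"
    using M P v by (simp add: add_mult_distrib_mat_vec[of "transpose_mat M * P" n n "P * M" v])
  then have "v \<bullet> ((transpose_mat M * P + P * M) *\<^sub>v v) =
      v \<bullet> (transpose_mat M *\<^sub>v (P *\<^sub>v v)) + v \<bullet> (P *\<^sub>v (M *\<^sub>v v))"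
    using M P v by (simp add: scalar_prod_add_distrib[of v n])
  then show ?thesis
    unfolding 1 2 by (metis mult_2)
qed

lemma qform_lyapunov:
  assumes M: "M \<in> carrier_mat n n" and P: "P \<in> carrier_mat n n" and sym: "transpose_mat P = P"
  shows "qform n (entries (transpose_mat M * P + P * M)) y =
    2 * sprod n (mvmult n (entries M) y) (mvmult n (entries P) y)"
proof -
  have "(M *\<^sub>v vec n y) \<bullet> (P *\<^sub>v vec n y) =
      sprod n (\<lambda>i. (M *\<^sub>v vec n y) $ i) (\<lambda>i. (P *\<^sub>v vec n y) $ i)"
    using M P by (intro scalar_prod_eq_sprod) auto
  also have "\<dots> = sprod n (mvmult n (entries M) y) (mvmult n (entries P) y)"
    using M P by (intro sprod_cong) (simp_all only: mvmult_eq_mult_mat_vec)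
  finally have "sprod n (mvmult n (entries M) y) (mvmult n (entries P) y) =
      (M *\<^sub>v vec n y) \<bullet> (P *\<^sub>v vec n y)" ..
  then show ?thesis
    using M P by (simp add: qform_eq_scalar_prod scalar_prod_lyapunov[OF M P sym])
qed

lemma complex_eigenvector_real_parts:
  fixes M :: "real mat"
  assumes M: "M \<in> carrier_mat n n" and "eigenvalue (map_mat complex_of_real M) k"
  obtains a b where "0 < sprod n a a + sprod n b b"
    and "\<And>i. i < n \<Longrightarrow> mvmult n (entries M) a i = Re k * a i - Im k * b i"
    and "\<And>i. i < n \<Longrightarrow> mvmult n (entries M) b i = Re k * b i + Im k * a i"
proof -
  define Mc where "Mc = map_mat complex_of_real M"
  have Mc: "Mc \<in> carrier_mat n n" using M unfolding Mc_def by simp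
  obtain v where v: "v \<in> carrier_vec n" "v \<noteq> 0\<^sub>v n" "Mc *\<^sub>v v = k \<cdot>\<^sub>v v"
    using assms(2) Mc unfolding Mc_def eigenvalue_def eigenvector_def by auto
  define a where "a i = Re (v $ i)" for i
  define b where "b i = Im (v $ i)" for i
  have ev: "(\<Sum>j<n. complex_of_real (M $$ (i, j)) * v $ j) = k * v $ i" if i: "i < n" for i
  proof -
    have "(Mc *\<^sub>v v) $ i = (\<Sum>j<n. Mc $$ (i, j) * v $ j)"
      by (rule mult_mat_vec_entry_sum[OF Mc v(1) i])
    also have "\<dots> = (\<Sum>j<n. complex_of_real (M $$ (i, j)) * v $ j)"
      using M i unfolding Mc_def by (intro sum.cong) auto
    finally show ?thesis using v(3) v(1) i by simp
  qed
  have re: "mvmult n (entries M) a i = Re k * a i - Im k * b i" if i: "i < n" for i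
  proof -
    have "Re (\<Sum>j<n. complex_of_real (M $$ (i, j)) * v $ j) = Re (k * v $ i)"
      using ev[OF i] by simp
    then show ?thesis unfolding mvmult_def a_def b_def by (simp add: Re_sum)
  qed
  have im: "mvmult n (entries M) b i = Re k * b i + Im k * a i" if i: "i < n" for i
  proof -
    have "Im (\<Sum>j<n. complex_of_real (M $$ (i, j)) * v $ j) = Im (k * v $ i)"
      using ev[OF i] by simp
    then show ?thesis unfolding mvmult_def a_def b_def by (simp add: Im_sum algebra_simps)
  qed
  have pos: "0 < sprod n a a + sprod n b b"
  proof (rule ccontr)
    assume "\<not> ?thesis"
    then have "sprod n a a = 0" "sprod n b b = 0"
      using sprod_self_nonneg[of n a] sprod_self_nonneg[of n b] by linarith+
    then have "\<forall>i<n. a i = 0 \<and> b i = 0" using sprod_self_eq_0D by blast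
    then have "v = 0\<^sub>v n"
      using v(1) unfolding a_def b_def by (intro eq_vecI) (auto simp: complex_eq_iff)
    with v(2) show False by simp
  qed
  show ?thesis using pos re im by (rule that)
qed

lemma lambda_max_lyapunov_nonneg_if_unstable:
  fixes M P :: "real mat"
  assumes M: "M \<in> carrier_mat n n" and "0 < n" and "\<not> stable M" and "P \<in> psd_set n"
  shows "0 \<le> lambda_max (transpose_mat M * P + P * M)"
proof -
  define Q where "Q = transpose_mat M * P + P * M"
  from \<open>P \<in> psd_set n\<close> have P: "P \<in> carrier_mat n n" and sym: "transpose_mat P = P"
    and psd: "\<And>x. 0 \<le> qform n (entries P) x"
    unfolding psd_set_iff_qform by auto
  have Q: "Q \<in> carrier_mat n n" "transpose_mat Q = Q"
    unfolding Q_def using M P sym by (simp_all add: lyapunov_symmetric)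
  obtain k where k: "eigenvalue (map_mat complex_of_real M) k" "0 \<le> Re k"
    using \<open>\<not> stable M\<close> unfolding stable_def by (auto simp: not_less)
  obtain a b where ab: "0 < sprod n a a + sprod n b b"
    and re: "\<And>i. i < n \<Longrightarrow> mvmult n (entries M) a i = Re k * a i - Im k * b i"
    and im: "\<And>i. i < n \<Longrightarrow> mvmult n (entries M) b i = Re k * b i + Im k * a i"
    using complex_eigenvector_real_parts[OF M k(1)] by blast
  have "sprod n (mvmult n (entries M) a) (mvmult n (entries P) a) =
      sprod n (\<lambda>i. Re k * a i + (- Im k) * b i) (mvmult n (entries P) a)"
    using re by (intro sprod_cong) auto
  moreover have "sprod n (mvmult n (entries M) b) (mvmult n (entries P) b) =
      sprod n (\<lambda>i. Re k * b i + Im k * a i) (mvmult n (entries P) b)"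
    using im by (intro sprod_cong) auto
  moreover have "sprod n b (mvmult n (entries P) a) = sprod n a (mvmult n (entries P) b)"
    using sprod_mvmult_symmetric[of n "entries P" b a] sym P transpose_mat_eq_iff_symmetric by blast
  ultimately have "qform n (entries Q) a + qform n (entries Q) b =
      2 * Re k * (qform n (entries P) a + qform n (entries P) b)"
    unfolding Q_def qform_lyapunov[OF M P sym] sprod_lincomb_left
    by (simp add: qform_def algebra_simps)
  also have "\<dots> \<ge> 0" using k(2) psd[of a] psd[of b] by simp
  finally have "0 \<le> qform n (entries Q) a + qform n (entries Q) b" .
  also have "\<dots> \<le> lambda_max Q * (sprod n a a + sprod n b b)"
    using lambda_max_rayleigh(1)[OF Q \<open>0 < n\<close>, of a] lambda_max_rayleigh(1)[OF Q \<open>0 < n\<close>, of b]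
    by (simp add: distrib_left)
  finally show ?thesis
    using ab unfolding Q_def by (simp add: zero_le_mult_iff)
qed

lemma triangular_entry_bound:
  fixes U :: "nat \<Rightarrow> nat \<Rightarrow> complex" and u :: "nat \<Rightarrow> complex"
  assumes low: "j < i \<Longrightarrow> U i j = 0" and diag: "Re (U i i) \<le> - a"
    and up: "i < j \<Longrightarrow> cmod (U i j) \<le> \<delta>" and "0 \<le> \<delta>"
  shows "Re (cnj (U i j * u j) * u i) \<le>
    (if i = j then - a * (cmod (u i))\<^sup>2 else 0) + \<delta> * ((cmod (u i))\<^sup>2 + (cmod (u j))\<^sup>2) / 2"
proof -
  have slack: "0 \<le> \<delta> * ((cmod (u i))\<^sup>2 + (cmod (u j))\<^sup>2) / 2" using \<open>0 \<le> \<delta>\<close> by simp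
  consider "i = j" | "j < i" | "i < j" by linarith
  then show ?thesis
  proof cases
    case 1
    have "cnj (U i i * u i) * u i = cnj (U i i) * (u i * cnj (u i))"
      by (simp add: mult_ac)
    also have "u i * cnj (u i) = complex_of_real ((cmod (u i))\<^sup>2)"
      by (rule complex_norm_square[symmetric])
    finally have eq: "cnj (U i i * u i) * u i = cnj (U i i) * complex_of_real ((cmod (u i))\<^sup>2)" .
    have re: "Re (cnj z * complex_of_real r) = Re z * r" for z r by simp
    have "Re (cnj (U i i * u i) * u i) = Re (U i i) * (cmod (u i))\<^sup>2"
      by (simp only: eq re)
    also have "\<dots> \<le> - a * (cmod (u i))\<^sup>2" using diag by (intro mult_right_mono) auto
    finally show ?thesis using 1 slack by simp
  next
    case 2
    then show ?thesis using low slack by simp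
  next
    case 3
    have "Re (cnj (U i j * u j) * u i) \<le> cmod (U i j) * (cmod (u j) * cmod (u i))"
      by (metis abs_Re_le_cmod abs_le_iff complex_mod_cnj norm_mult mult.assoc)
    also have "\<dots> \<le> \<delta> * (cmod (u j) * cmod (u i))"
      using up 3 by (intro mult_right_mono) auto
    also have "\<dots> \<le> \<delta> * (((cmod (u i))\<^sup>2 + (cmod (u j))\<^sup>2) / 2)"
    proof (intro mult_left_mono \<open>0 \<le> \<delta>\<close>)
      have "0 \<le> (cmod (u i) - cmod (u j))\<^sup>2" by simp
      then show "cmod (u j) * cmod (u i) \<le> ((cmod (u i))\<^sup>2 + (cmod (u j))\<^sup>2) / 2"
        by (simp add: power2_eq_square algebra_simps)
    qed
    finally show ?thesis using 3 by simp
  qed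
qed

lemma triangular_dissipative:
  fixes U :: "nat \<Rightarrow> nat \<Rightarrow> complex" and u :: "nat \<Rightarrow> complex"
  assumes low: "\<And>i j. j < i \<Longrightarrow> i < n \<Longrightarrow> U i j = 0" and diag: "\<And>i. i < n \<Longrightarrow> Re (U i i) \<le> - a"
    and up: "\<And>i j. i < j \<Longrightarrow> j < n \<Longrightarrow> cmod (U i j) \<le> \<delta>"
    and "0 \<le> \<delta>" and small: "\<delta> * n \<le> a / 2"
  shows "Re (\<Sum>i<n. cnj (\<Sum>j<n. U i j * u j) * u i) \<le> - (a / 2) * (\<Sum>i<n. (cmod (u i))\<^sup>2)"
proof -
  define f where "f i = (cmod (u i))\<^sup>2" for i
  define S where "S = (\<Sum>i<n. f i)"
  have diag_sum: "(\<Sum>i<n. \<Sum>j<n. if i = j then - a * f i else 0) = - a * S"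
    by (simp add: S_def sum_distrib_left)
  have "(\<Sum>i<n. \<Sum>j<n. f i + f j) = real n * S + real n * S"
    by (simp add: S_def sum.distrib sum_distrib_left)
  then have off_sum: "(\<Sum>i<n. \<Sum>j<n. \<delta> * (f i + f j) / 2) = \<delta> * n * S"
    by (simp add: sum_divide_distrib[symmetric] sum_distrib_left[symmetric])
  have "Re (\<Sum>i<n. cnj (\<Sum>j<n. U i j * u j) * u i) = (\<Sum>i<n. \<Sum>j<n. Re (cnj (U i j * u j) * u i))"
    by (simp add: Re_sum sum_distrib_right cnj_sum)
  also have "\<dots> \<le> (\<Sum>i<n. \<Sum>j<n. (if i = j then - a * (cmod (u i))\<^sup>2 else 0) +
      \<delta> * ((cmod (u i))\<^sup>2 + (cmod (u j))\<^sup>2) / 2)"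
    using assms by (intro sum_mono triangular_entry_bound) auto
  also have "\<dots> = - a * S + \<delta> * n * S"
    unfolding sum.distrib diag_sum[symmetric] off_sum[symmetric] f_def ..
  also have "\<dots> \<le> - (a / 2) * S"
    using mult_right_mono[OF small, of S] by (simp add: S_def f_def sum_nonneg)
  finally show ?thesis unfolding S_def f_def .
qed

lemma sprod_gram_form:
  fixes s :: "nat \<Rightarrow> nat \<Rightarrow> complex" and p q :: "nat \<Rightarrow> real"
  shows "sprod n p (mvmult n (\<lambda>k l. Re (\<Sum>i<n. cnj (s i k) * s i l)) q) =
    Re (\<Sum>i<n. cnj (\<Sum>k<n. s i k * complex_of_real (p k)) * (\<Sum>l<n. s i l * complex_of_real (q l)))"
proof -
  define c where "c i k l = Re (cnj (s i k) * s i l)" for i k l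
  have "sprod n p (mvmult n (\<lambda>k l. Re (\<Sum>i<n. cnj (s i k) * s i l)) q)
     = (\<Sum>k<n. p k * (\<Sum>l<n. (\<Sum>i<n. c i k l) * q l))"
    unfolding sprod_def mvmult_def c_def by (simp only: Re_sum)
  also have "\<dots> = (\<Sum>k<n. \<Sum>l<n. \<Sum>i<n. p k * c i k l * q l)"
    by (simp add: sum_distrib_left sum_distrib_right mult_ac)
  also have "\<dots> = (\<Sum>k<n. \<Sum>i<n. \<Sum>l<n. p k * c i k l * q l)"
    by (intro sum.cong refl sum.swap)
  also have "\<dots> = (\<Sum>i<n. \<Sum>k<n. \<Sum>l<n. p k * c i k l * q l)"
    by (rule sum.swap)
  also have "\<dots> = Re (\<Sum>i<n. cnj (\<Sum>k<n. s i k * complex_of_real (p k)) * (\<Sum>l<n. s i l * complex_of_real (q l)))"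
  proof -
    have "cnj (\<Sum>k<n. s i k * complex_of_real (p k)) * (\<Sum>l<n. s i l * complex_of_real (q l))
      = (\<Sum>k<n. \<Sum>l<n. (cnj (s i k) * s i l) * complex_of_real (p k * q l))" for i
    proof -
      have "cnj (\<Sum>k<n. s i k * complex_of_real (p k)) * (\<Sum>l<n. s i l * complex_of_real (q l))
        = (\<Sum>l<n. \<Sum>k<n. (cnj (s i k) * s i l) * complex_of_real (p k * q l))"
        by (simp add: cnj_sum sum_product mult_ac)
      also have "\<dots> = (\<Sum>k<n. \<Sum>l<n. (cnj (s i k) * s i l) * complex_of_real (p k * q l))"
        by (rule sum.swap)
      finally show ?thesis .
    qed
    then have "Re (\<Sum>i<n. cnj (\<Sum>k<n. s i k * complex_of_real (p k)) * (\<Sum>l<n. s i l * complex_of_real (q l)))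
      = (\<Sum>i<n. \<Sum>k<n. \<Sum>l<n. Re ((cnj (s i k) * s i l) * complex_of_real (p k * q l)))"
      by (simp only: Re_sum)
    also have "\<dots> = (\<Sum>i<n. \<Sum>k<n. \<Sum>l<n. p k * c i k l * q l)"
      unfolding c_def by (intro sum.cong refl) (simp add: mult_ac)
    finally show ?thesis by simp
  qed
  finally show ?thesis .
qed


definition gram_mat :: "nat \<Rightarrow> (nat \<Rightarrow> nat \<Rightarrow> complex) \<Rightarrow> real mat" where
  "gram_mat n s = mat n n (\<lambda>(k, l). Re (\<Sum>i<n. cnj (s i k) * s i l))"

lemma sprod_mvmult_gram_mat:
  "sprod n p (mvmult n (entries (gram_mat n s)) q) =
    Re (\<Sum>i<n. cnj (\<Sum>k<n. s i k * complex_of_real (p k)) * (\<Sum>l<n. s i l * complex_of_real (q l)))"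
proof -
  have "sprod n p (mvmult n (entries (gram_mat n s)) q) =
      sprod n p (mvmult n (\<lambda>k l. Re (\<Sum>i<n. cnj (s i k) * s i l)) q)"
    unfolding gram_mat_def by (intro sprod_cong mvmult_cong) auto
  then show ?thesis by (simp only: sprod_gram_form)
qed

lemma gram_mat_psd: "gram_mat n s \<in> psd_set n"
  unfolding psd_set_iff_qform
proof (intro conjI allI)
  show "gram_mat n s \<in> carrier_mat n n" unfolding gram_mat_def by simp
  have "Re (\<Sum>i<n. cnj (s i k) * s i l) = Re (\<Sum>i<n. cnj (s i l) * s i k)" for k l
    unfolding Re_sum by (intro sum.cong refl) simp
  then show "transpose_mat (gram_mat n s) = gram_mat n s"
    unfolding gram_mat_def by (intro eq_matI) auto
  have "0 \<le> Re (cnj z * z)" for z :: complex by simp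
  then show "0 \<le> qform n (entries (gram_mat n s)) x" for x
    unfolding qform_def sprod_mvmult_gram_mat Re_sum by (intro sum_nonneg)
qed

lemma sum_mult_mat_apply:
  fixes A B :: "'a::comm_semiring_0 mat"
  assumes A: "A \<in> carrier_mat n m" and B: "B \<in> carrier_mat m p" and "i < n"
  shows "(\<Sum>k<m. A $$ (i, k) * (\<Sum>l<p. B $$ (k, l) * y l)) = (\<Sum>l<p. (A * B) $$ (i, l) * y l)"
proof -
  have "(\<Sum>k<m. A $$ (i, k) * (\<Sum>l<p. B $$ (k, l) * y l)) =
      (\<Sum>k<m. \<Sum>l<p. A $$ (i, k) * B $$ (k, l) * y l)"
    by (simp add: sum_distrib_left mult.assoc)
  also have "\<dots> = (\<Sum>l<p. \<Sum>k<m. A $$ (i, k) * B $$ (k, l) * y l)"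
    by (rule sum.swap)
  also have "\<dots> = (\<Sum>l<p. (A * B) $$ (i, l) * y l)"
  proof (rule sum.cong[OF refl])
    fix l assume "l \<in> {..<p}"
    then show "(\<Sum>k<m. A $$ (i, k) * B $$ (k, l) * y l) = (A * B) $$ (i, l) * y l"
      using assms by (simp only: mult_mat_entry_sum sum_distrib_right lessThan_iff)
  qed
  finally show ?thesis .
qed

lemma apply_eq_0_if_left_invertible:
  fixes S W :: "'a::comm_semiring_1 mat"
  assumes S: "S \<in> carrier_mat n n" and W: "W \<in> carrier_mat n n" and "S * W = 1\<^sub>m n"
    and zero: "\<And>i. i < n \<Longrightarrow> (\<Sum>l<n. W $$ (i, l) * y l) = 0" and "k < n"
  shows "y k = 0"
proof -
  have "y k = (\<Sum>l<n. if k = l then y l else 0)"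
    using \<open>k < n\<close> by simp
  also have "\<dots> = (\<Sum>l<n. (S * W) $$ (k, l) * y l)"
    using \<open>S * W = 1\<^sub>m n\<close> \<open>k < n\<close> by (intro sum.cong) auto
  also have "\<dots> = (\<Sum>i<n. S $$ (k, i) * (\<Sum>l<n. W $$ (i, l) * y l))"
    using sum_mult_mat_apply[OF S W \<open>k < n\<close>] by simp
  also have "\<dots> = 0" using zero by simp
  finally show ?thesis .
qed

lemma intertwining_apply:
  fixes M :: "real mat" and T W :: "complex mat"
  assumes M: "M \<in> carrier_mat n n" and T: "T \<in> carrier_mat n n" and W: "W \<in> carrier_mat n n"
    and WM: "W * map_mat complex_of_real M = T * W" and i: "i < n"
  shows "(\<Sum>k<n. W $$ (i, k) * complex_of_real (mvmult n (entries M) y k)) =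
    (\<Sum>j<n. T $$ (i, j) * (\<Sum>l<n. W $$ (j, l) * complex_of_real (y l)))"
proof -
  have "(\<Sum>k<n. W $$ (i, k) * complex_of_real (mvmult n (entries M) y k)) =
      (\<Sum>k<n. W $$ (i, k) * (\<Sum>l<n. map_mat complex_of_real M $$ (k, l) * complex_of_real (y l)))"
    unfolding mvmult_def using M by (auto intro!: sum.cong)
  also have "\<dots> = (\<Sum>l<n. (W * map_mat complex_of_real M) $$ (i, l) * complex_of_real (y l))"
    using M by (intro sum_mult_mat_apply[OF W _ i]) simp
  also have "\<dots> = (\<Sum>j<n. T $$ (i, j) * (\<Sum>l<n. W $$ (j, l) * complex_of_real (y l)))"
    unfolding WM using sum_mult_mat_apply[OF T W i] by simp
  finally show ?thesis .
qed

lemma poly_linear_factors_root: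
  fixes x :: "'a::comm_ring_1"
  shows "x \<in> set xs \<Longrightarrow> poly (\<Prod>a\<leftarrow>xs. [:- a, 1:]) x = 0"
  by (induction xs) auto

lemma stable_triangularization:
  fixes M :: "real mat"
  assumes M: "M \<in> carrier_mat n n" and "stable M"
  obtains T W :: "complex mat"
  where "T \<in> carrier_mat n n" "upper_triangular T" "\<And>i. i < n \<Longrightarrow> Re (T $$ (i, i)) < 0"
    and "W \<in> carrier_mat n n" "W * map_mat complex_of_real M = T * W"
    and "\<And>y k. (\<And>i. i < n \<Longrightarrow> (\<Sum>l<n. W $$ (i, l) * y l) = 0) \<Longrightarrow> k < n \<Longrightarrow> y k = 0"
proof -
  define Mc where "Mc = map_mat complex_of_real M"
  have Mc: "Mc \<in> carrier_mat n n" using M unfolding Mc_def by simp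
  obtain es where es: "char_poly Mc = (\<Prod>a\<leftarrow>es. [:- a, 1:])"
    using char_poly_factorized[OF Mc] by blast
  obtain T S W where "schur_decomposition Mc es = (T, S, W)"
    by (metis prod_cases3)
  from schur_decomposition[OF Mc es this] have sim: "similar_mat_wit Mc T S W"
    and ut: "upper_triangular T" and diag: "diag_mat T = es" by auto
  note sim = similar_mat_witD2[OF Mc sim]
  have T: "T \<in> carrier_mat n n" and S: "S \<in> carrier_mat n n" and W: "W \<in> carrier_mat n n"
    using sim by auto
  have "W * Mc = W * (S * (T * W))" using sim(3) assoc_mult_mat[OF S T W] by simp
  also have "\<dots> = (W * S) * (T * W)"
    using assoc_mult_mat[OF W S mult_carrier_mat[OF T W]] by simp
  also have "\<dots> = T * W" using sim(2) T W by simp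
  finally have intertwine: "W * Mc = T * W" .
  have "Re (T $$ (i, i)) < 0" if "i < n" for i
  proof -
    have "T $$ (i, i) \<in> set es" using diag that T unfolding diag_mat_def by auto
    then have "poly (char_poly Mc) (T $$ (i, i)) = 0" using es poly_linear_factors_root by simp
    then have "eigenvalue Mc (T $$ (i, i))" using eigenvalue_root_char_poly[OF Mc] by simp
    then show ?thesis using \<open>stable M\<close> unfolding stable_def Mc_def by blast
  qed
  moreover note apply_eq_0_if_left_invertible[OF S W sim(1)]
  ultimately show ?thesis
    using that[OF T ut _ W] intertwine unfolding Mc_def by blast
qed

text \<open>Conjugating a triangular \<open>T\<close> by \<open>diag(\<epsilon>\<^sup>i)\<close> multiplies the entry \<open>(i,j)\<close> by \<open>\<epsilon>\<^sup>j\<^sup>-\<^sup>i\<close>;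
  for small \<open>\<epsilon>\<close> the strictly upper part becomes negligible against the diagonal.\<close>
lemma triangular_scaling:
  fixes T :: "nat \<Rightarrow> nat \<Rightarrow> complex"
  assumes "0 < n" and diag: "\<And>i. i < n \<Longrightarrow> Re (T i i) < 0"
  obtains a \<epsilon> :: real where "0 < a" "0 < \<epsilon>" "\<And>i. i < n \<Longrightarrow> Re (T i i) \<le> - a"
    "\<And>i j. i < j \<Longrightarrow> j < n \<Longrightarrow> cmod (T i j) * (\<epsilon> ^ j / \<epsilon> ^ i) \<le> a / (2 * n)"
proof -
  define a where "a = Min ((\<lambda>i. - Re (T i i)) ` {..<n})"
  have a: "0 < a" unfolding a_def using \<open>0 < n\<close> diag by (subst Min_gr_iff) auto
  have a_le: "Re (T i i) \<le> - a" if "i < n" for i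
    using that unfolding a_def by (smt (verit) Min_le finite_imageI finite_lessThan image_eqI lessThan_iff)
  define C where "C = (\<Sum>i<n. \<Sum>j<n. cmod (T i j)) + 1"
  have C_ge: "cmod (T i j) \<le> C" if "i < n" "j < n" for i j
  proof -
    have "cmod (T i j) \<le> (\<Sum>j<n. cmod (T i j))"
      using that by (intro member_le_sum) auto
    also have "\<dots> \<le> (\<Sum>i<n. \<Sum>j<n. cmod (T i j))"
      using that by (intro member_le_sum[of i "{..<n}" "\<lambda>i. \<Sum>j<n. cmod (T i j)"]) (auto intro: sum_nonneg)
    finally show ?thesis unfolding C_def by simp
  qed
  have C: "0 < C" unfolding C_def by (smt (verit) norm_ge_zero sum_nonneg)
  define \<epsilon> where "\<epsilon> = min 1 (a / (2 * C * n))"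
  have \<epsilon>: "0 < \<epsilon>" "\<epsilon> \<le> 1" "C * \<epsilon> \<le> a / (2 * n)"
    unfolding \<epsilon>_def using a C \<open>0 < n\<close> by (auto simp: field_simps min_def)
  have "cmod (T i j) * (\<epsilon> ^ j / \<epsilon> ^ i) \<le> a / (2 * n)" if "i < j" "j < n" for i j
  proof -
    have "\<epsilon> ^ j / \<epsilon> ^ i = \<epsilon> ^ (j - i)" using \<epsilon>(1) that by (simp add: power_diff)
    also have "\<dots> \<le> \<epsilon> ^ 1" using \<epsilon> that by (intro power_decreasing) auto
    finally have "\<epsilon> ^ j / \<epsilon> ^ i \<le> \<epsilon>" by simp
    then have "cmod (T i j) * (\<epsilon> ^ j / \<epsilon> ^ i) \<le> C * \<epsilon>"
      using C_ge[of i j] that \<epsilon>(1) C by (intro mult_mono) auto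
    with \<epsilon>(3) show ?thesis by linarith
  qed
  with a a_le \<epsilon>(1) show ?thesis using that by blast
qed

lemma stable_scaled_triangular_form:
  fixes M :: "real mat"
  assumes M: "M \<in> carrier_mat n n" and "0 < n" and "stable M"
  obtains s U :: "nat \<Rightarrow> nat \<Rightarrow> complex" and a :: real
  where "0 < a"
    and "\<And>i j. j < i \<Longrightarrow> i < n \<Longrightarrow> U i j = 0" and "\<And>i. i < n \<Longrightarrow> Re (U i i) \<le> - a"
    and "\<And>i j. i < j \<Longrightarrow> j < n \<Longrightarrow> cmod (U i j) \<le> a / (2 * n)"
    and "\<And>y i. i < n \<Longrightarrow> (\<Sum>k<n. s i k * complex_of_real (mvmult n (entries M) y k)) =
      (\<Sum>j<n. U i j * (\<Sum>k<n. s j k * complex_of_real (y k)))"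
    and "\<And>y k. (\<And>i. i < n \<Longrightarrow> (\<Sum>l<n. s i l * y l) = 0) \<Longrightarrow> k < n \<Longrightarrow> y k = 0"
proof -
  obtain T W where T: "T \<in> carrier_mat n n" "upper_triangular T" "\<And>i. i < n \<Longrightarrow> Re (T $$ (i, i)) < 0"
    and W: "W \<in> carrier_mat n n" "W * map_mat complex_of_real M = T * W"
    and W_inj: "\<And>y k. (\<And>i. i < n \<Longrightarrow> (\<Sum>l<n. W $$ (i, l) * y l) = 0) \<Longrightarrow> k < n \<Longrightarrow> y k = 0"
    using stable_triangularization[OF M \<open>stable M\<close>] by blast
  obtain a \<epsilon> :: real where a: "0 < a" and \<epsilon>: "0 < \<epsilon>"
    and diag: "\<And>i. i < n \<Longrightarrow> Re (T $$ (i, i)) \<le> - a"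
    and off: "\<And>i j. i < j \<Longrightarrow> j < n \<Longrightarrow> cmod (T $$ (i, j)) * (\<epsilon> ^ j / \<epsilon> ^ i) \<le> a / (2 * n)"
    using triangular_scaling[of n "entries T"] \<open>0 < n\<close> T(3) by blast
  define s where "s i k = W $$ (i, k) / complex_of_real (\<epsilon> ^ i)" for i k
  define U where "U i j = T $$ (i, j) * complex_of_real (\<epsilon> ^ j / \<epsilon> ^ i)" for i j
  have s_W: "(\<Sum>k<n. s i k * y k) = (\<Sum>k<n. W $$ (i, k) * y k) / complex_of_real (\<epsilon> ^ i)" for i y
    unfolding s_def by (simp add: sum_divide_distrib)
  show ?thesis
  proof (rule that)
    show "U i j = 0" if "j < i" "i < n" for i j
      using T(1,2) that unfolding U_def upper_triangular_def by auto
    show "Re (U i i) \<le> - a" if "i < n" for i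
      using diag that \<epsilon> unfolding U_def by simp
    show "cmod (U i j) \<le> a / (2 * n)" if "i < j" "j < n" for i j
      using off[OF that] \<epsilon> unfolding U_def by (simp add: norm_mult norm_divide norm_power)
    show "(\<Sum>k<n. s i k * complex_of_real (mvmult n (entries M) y k)) =
        (\<Sum>j<n. U i j * (\<Sum>k<n. s j k * complex_of_real (y k)))" if "i < n" for y i
    proof -
      define w where "w j = (\<Sum>l<n. W $$ (j, l) * complex_of_real (y l))" for j
      have "(\<Sum>k<n. s i k * complex_of_real (mvmult n (entries M) y k)) =
          (\<Sum>j<n. T $$ (i, j) * w j) / complex_of_real (\<epsilon> ^ i)"
        by (simp only: s_W w_def intertwining_apply[OF M T(1) W that])
      also have "\<dots> = (\<Sum>j<n. U i j * (w j / complex_of_real (\<epsilon> ^ j)))"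
        unfolding sum_divide_distrib U_def using \<epsilon> by (intro sum.cong refl) (simp add: field_simps)
      also have "\<dots> = (\<Sum>j<n. U i j * (\<Sum>k<n. s j k * complex_of_real (y k)))"
        by (simp only: s_W w_def)
      finally show ?thesis .
    qed
    show "y k = 0" if "\<And>i. i < n \<Longrightarrow> (\<Sum>l<n. s i l * y l) = 0" "k < n" for y k
      using W_inj[of y k] that \<epsilon> unfolding s_W by simp
  qed (use a in auto)
qed

lemma stable_lyapunov_solution:
  fixes M :: "real mat"
  assumes M: "M \<in> carrier_mat n n" and "0 < n" and "stable M"
  obtains P where "P \<in> psd_set n"
    and "\<And>y. 0 < sprod n y y \<Longrightarrow> sprod n (mvmult n (entries M) y) (mvmult n (entries P) y) < 0"
proof (rule stable_scaled_triangular_form[OF assms])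
  fix s U :: "nat \<Rightarrow> nat \<Rightarrow> complex" and a :: real
  assume a: "0 < a"
    and low: "\<And>i j. j < i \<Longrightarrow> i < n \<Longrightarrow> U i j = 0" and diag: "\<And>i. i < n \<Longrightarrow> Re (U i i) \<le> - a"
    and off: "\<And>i j. i < j \<Longrightarrow> j < n \<Longrightarrow> cmod (U i j) \<le> a / (2 * n)"
    and intertwine: "\<And>y i. i < n \<Longrightarrow> (\<Sum>k<n. s i k * complex_of_real (mvmult n (entries M) y k)) =
      (\<Sum>j<n. U i j * (\<Sum>k<n. s j k * complex_of_real (y k)))"
    and inj: "\<And>y k. (\<And>i. i < n \<Longrightarrow> (\<Sum>l<n. s i l * y l) = 0) \<Longrightarrow> k < n \<Longrightarrow> y k = 0"
  define u where "u y i = (\<Sum>k<n. s i k * complex_of_real (y k))" for y i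
  have "sprod n (mvmult n (entries M) y) (mvmult n (entries (gram_mat n s)) y) < 0"
    if y: "0 < sprod n y y" for y
  proof -
    have pos: "0 < (\<Sum>i<n. (cmod (u y i))\<^sup>2)"
    proof (rule ccontr)
      assume "\<not> ?thesis"
      moreover have "0 \<le> (\<Sum>i<n. (cmod (u y i))\<^sup>2)" by (intro sum_nonneg) simp
      ultimately have "(\<Sum>i<n. (cmod (u y i))\<^sup>2) = 0" by linarith
      then have "u y i = 0" if "i < n" for i
        using that by (simp add: sum_nonneg_eq_0_iff)
      then have "complex_of_real (y k) = 0" if "k < n" for k
        using inj[of "\<lambda>l. complex_of_real (y l)" k] that unfolding u_def by blast
      then have "sprod n y y = 0" unfolding sprod_def by simp
      with y show False by simp
    qed
    have "sprod n (mvmult n (entries M) y) (mvmult n (entries (gram_mat n s)) y) =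
        Re (\<Sum>i<n. cnj (\<Sum>j<n. U i j * u y j) * u y i)"
      unfolding sprod_mvmult_gram_mat u_def
      by (intro arg_cong[where f = Re] sum.cong refl) (simp only: intertwine lessThan_iff)
    also have "\<dots> \<le> - (a / 2) * (\<Sum>i<n. (cmod (u y i))\<^sup>2)"
    proof (rule triangular_dissipative[OF low diag off])
      show "0 \<le> a / (2 * n)" using a by simp
      show "a / (2 * n) * n \<le> a / 2" using \<open>0 < n\<close> by simp
    qed
    also have "\<dots> < 0" using a pos by simp
    finally show ?thesis .
  qed
  then show ?thesis by (rule that[OF gram_mat_psd])
qed

lemma qform_smult_mat:
  "Q \<in> carrier_mat n n \<Longrightarrow> qform n (entries (t \<cdot>\<^sub>m Q)) x = t * qform n (entries Q) x"
  unfolding qform_expand by (auto simp: sum_distrib_left mult_ac intro!: sum.cong)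

lemma lambda_max_smult:
  assumes Q: "Q \<in> carrier_mat n n" and sym: "transpose_mat Q = Q" and "0 < n" and "0 < t"
  shows "lambda_max (t \<cdot>\<^sub>m Q) = t * lambda_max Q"
proof -
  have tQ: "t \<cdot>\<^sub>m Q \<in> carrier_mat n n" "transpose_mat (t \<cdot>\<^sub>m Q) = t \<cdot>\<^sub>m Q"
    using Q sym by (auto intro!: eq_matI simp: transpose_mat_eq_iff_symmetric)
  obtain x where x: "sprod n x x = 1" "qform n (entries (t \<cdot>\<^sub>m Q)) x = lambda_max (t \<cdot>\<^sub>m Q)"
    using lambda_max_rayleigh(2)[OF tQ \<open>0 < n\<close>] by blast
  obtain x' where x': "sprod n x' x' = 1" "qform n (entries Q) x' = lambda_max Q"
    using lambda_max_rayleigh(2)[OF Q sym \<open>0 < n\<close>] by blast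
  have "lambda_max (t \<cdot>\<^sub>m Q) = t * qform n (entries Q) x"
    using x(2) by (simp add: qform_smult_mat[OF Q])
  also have "\<dots> \<le> t * lambda_max Q"
    using lambda_max_rayleigh(1)[OF Q sym \<open>0 < n\<close>, of x] x(1) \<open>0 < t\<close>
    by (intro mult_left_mono) auto
  finally have "lambda_max (t \<cdot>\<^sub>m Q) \<le> t * lambda_max Q" .
  moreover have "t * lambda_max Q \<le> lambda_max (t \<cdot>\<^sub>m Q)"
    using x' lambda_max_rayleigh(1)[OF tQ \<open>0 < n\<close>, of x'] by (simp add: qform_smult_mat[OF Q])
  ultimately show ?thesis by linarith
qed

definition lyapunov_inf :: "nat \<Rightarrow> real mat \<Rightarrow> ereal" where
  "lyapunov_inf n M = (INF P \<in> psd_set n. ereal (lambda_max (transpose_mat M * P + P * M)))"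

lemma lyapunov_inf_stable:
  assumes M: "M \<in> carrier_mat n n" and "0 < n" and "stable M"
  shows "lyapunov_inf n M = -\<infinity>"
proof -
  obtain P where "P \<in> psd_set n"
    and neg: "\<And>y. 0 < sprod n y y \<Longrightarrow> sprod n (mvmult n (entries M) y) (mvmult n (entries P) y) < 0"
    using stable_lyapunov_solution[OF assms] by blast
  then have P: "P \<in> carrier_mat n n" "transpose_mat P = P" and psd: "\<And>x. 0 \<le> qform n (entries P) x"
    unfolding psd_set_iff_qform by auto
  define Q where "Q = transpose_mat M * P + P * M"
  have Q: "Q \<in> carrier_mat n n" "transpose_mat Q = Q"
    unfolding Q_def using M P by (simp_all add: lyapunov_symmetric)
  obtain x where "sprod n x x = 1" "qform n (entries Q) x = lambda_max Q"
    using lambda_max_rayleigh(2)[OF Q \<open>0 < n\<close>] by blast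
  then have "lambda_max Q < 0"
    using neg[of x] unfolding Q_def qform_lyapunov[OF M P] by simp
  have scaled: "transpose_mat M * (t \<cdot>\<^sub>m P) + (t \<cdot>\<^sub>m P) * M = t \<cdot>\<^sub>m Q" for t
    unfolding Q_def using M P
    by (simp add: mult_smult_distrib mult_smult_assoc_mat add_smult_distrib_left_mat[of _ n n])
  show ?thesis
    unfolding lyapunov_inf_def
  proof (rule ereal_bot)
    fix B :: real
    define t where "t = (\<bar>B\<bar> + 1) / - lambda_max Q"
    have t: "0 < t" "t * lambda_max Q = - (\<bar>B\<bar> + 1)"
      unfolding t_def using \<open>lambda_max Q < 0\<close> by (auto simp: field_simps)
    have "t \<cdot>\<^sub>m P \<in> psd_set n"
      unfolding psd_set_iff_qform using P psd t(1)
      by (auto intro!: eq_matI simp: qform_smult_mat transpose_mat_eq_iff_symmetric)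
    moreover have "lambda_max (t \<cdot>\<^sub>m Q) \<le> B"
      using lambda_max_smult[OF Q \<open>0 < n\<close> t(1)] t(2) by simp
    ultimately show "(INF P \<in> psd_set n. ereal (lambda_max (transpose_mat M * P + P * M))) \<le> ereal B"
      by (intro INF_lower2[of "t \<cdot>\<^sub>m P"]) (simp_all add: scaled)
  qed
qed

lemma lyapunov_inf_unstable:
  assumes "M \<in> carrier_mat n n" and "0 < n" and "\<not> stable M"
  shows "0 \<le> lyapunov_inf n M"
  unfolding lyapunov_inf_def
  using lambda_max_lyapunov_nonneg_if_unstable[OF assms] by (intro INF_greatest) auto

lemma lyapunov_inf_dichotomy:
  assumes "M \<in> carrier_mat n n" and "0 < n"
  shows "lyapunov_inf n M = -\<infinity> \<longleftrightarrow> stable M" and "0 \<le> lyapunov_inf n M \<longleftrightarrow> \<not> stable M"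
proof -
  have "\<not> (0::ereal) \<le> -\<infinity>" by simp
  then show "lyapunov_inf n M = -\<infinity> \<longleftrightarrow> stable M" and "0 \<le> lyapunov_inf n M \<longleftrightarrow> \<not> stable M"
    using lyapunov_inf_stable[OF assms] lyapunov_inf_unstable[OF assms] by metis+
qed

lemma finite_attack_space: "finite (attack_space N)"
proof -
  let ?F = "\<lambda>X. mat N N (\<lambda>(i, j). if (i, j) \<in> X then 1 else (0::real))"
  have "attack_space N \<subseteq> ?F ` Pow ({..<N} \<times> {..<N})"
  proof
    fix \<alpha> assume a: "\<alpha> \<in> attack_space N"
    define X where "X = {(i, j). i < N \<and> j < N \<and> \<alpha> $$ (i, j) = 1}"
    have "\<alpha> = ?F X"
    proof (rule eq_matI)
      fix i j assume "i < dim_row (?F X)" "j < dim_col (?F X)"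
      then have ij: "i < N" "j < N" by auto
      have "\<alpha> $$ (i, j) = 0 \<or> \<alpha> $$ (i, j) = 1" using a ij unfolding attack_space_def by auto
      then show "\<alpha> $$ (i, j) = ?F X $$ (i, j)" using ij unfolding X_def by auto
    qed (use a in \<open>auto simp: attack_space_def\<close>)
    moreover have "X \<in> Pow ({..<N} \<times> {..<N})" unfolding X_def by auto
    ultimately show "\<alpha> \<in> ?F ` Pow ({..<N} \<times> {..<N})" by blast
  qed
  then show ?thesis by (rule finite_subset) auto
qed


lemma one_mat_in_attack_space: "1\<^sub>m N \<in> attack_space N"
  unfolding attack_space_def by auto

lemma A_alpha_carrier:
  assumes "A \<in> carrier_mat n n" "B \<in> carrier_mat n m" "K \<in> carrier_mat m n"
  shows "A_alpha ns ms A B K \<alpha> \<in> carrier_mat n n"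
  using assms unfolding A_alpha_def blk_scale_def by auto

theorem theorem1:
  fixes N :: nat and ns ms :: "nat \<Rightarrow> nat" and A B K :: "real mat"
  assumes "N \<ge> 1"
    and "\<forall>i < N. ns i \<ge> 1"
    and "A \<in> carrier_mat (\<Sum>i<N. ns i) (\<Sum>i<N. ns i)"
    and "block_diag N ns ms B"
    and "K \<in> carrier_mat (\<Sum>i<N. ms i) (\<Sum>i<N. ns i)"
  shows "(resilient N ns ms A B K \<longleftrightarrow> gamma_L0 N ns ms A B K = -\<infinity>) \<and>
         (\<not> resilient N ns ms A B K \<longleftrightarrow> gamma_L0 N ns ms A B K \<ge> 0)"
proof -
  define n where "n = (\<Sum>i<N. ns i)"
  define \<gamma> where "\<gamma> \<alpha> = lyapunov_inf n (A_alpha ns ms A B K \<alpha>)" for \<alpha>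
  have "0 < ns 0" "ns 0 \<le> n"
    using assms(1,2) unfolding n_def by (auto intro: member_le_sum)
  then have "0 < n" by linarith
  have "A_alpha ns ms A B K \<alpha> \<in> carrier_mat n n" for \<alpha>
    using assms(3-5) unfolding n_def block_diag_def by (intro A_alpha_carrier) auto
  note dichotomy = lyapunov_inf_dichotomy[OF this \<open>0 < n\<close>]
  have gamma: "gamma_L0 N ns ms A B K = Max (\<gamma> ` attack_space N)"
    unfolding gamma_L0_def \<gamma>_def lyapunov_inf_def n_def ..
  have fin: "finite (\<gamma> ` attack_space N)" and ne: "\<gamma> ` attack_space N \<noteq> {}"
    using finite_attack_space one_mat_in_attack_space by auto
  have "Max (\<gamma> ` attack_space N) = -\<infinity> \<longleftrightarrow> (\<forall>\<alpha>\<in>attack_space N. stable (A_alpha ns ms A B K \<alpha>))"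
    using fin ne unfolding \<gamma>_def dichotomy(1)[symmetric] ereal_infty_less_eq(2)[symmetric]
    by (simp del: ereal_infty_less_eq)
  moreover have "0 \<le> Max (\<gamma> ` attack_space N) \<longleftrightarrow> (\<exists>\<alpha>\<in>attack_space N. \<not> stable (A_alpha ns ms A B K \<alpha>))"
    using fin ne unfolding \<gamma>_def dichotomy(2)[symmetric] by (simp add: Max_ge_iff)
  ultimately show ?thesis
    unfolding gamma resilient_def by blast
qed

end
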